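(* Assume the standing setup below and additionally $n\ge 2s-2r+1$. Then for every integer $i$ with $0\le i\le s-2r+1$, \[ \binom{n-1}{i}+\binom{n-1}{i+1}+\cdots+\binom{n-1}{i+2r-1}+\dim\left(\frac{\langle L_H: H\in \bigcup_{j=i}^{s}\mathbb{P}_j(X)\rangle}{\langle L_H: H\in \bigcup_{j=i}^{i+2r-1}\mathbb{P}_j(X)\rangle}\right) \le \binom{n-1}{s-2r+1}+\binom{n-1}{s-2r+2}+\cdots+\binom{n-1}{s}, \] where $\langle S\rangle$ is the $\mathbb{F}_p$-span of $S$ and the fraction denotes the quotient vector space.
   Context: Standing setup: $p$ is a prime; $K=\{k_1,\ldots,k_r\}$ and $L=\{l_1,\ldots,l_s\}$ are disjoint subsets of $\{0,1,\ldots,p-1\}$; $\mathcal{A}=\{A_1,\ldots,A_m\}$ is a family of distinct subsets of $[n]$ with $|A_i|\pmod p\in K$ for all $i$ and $|A_i\cap A_j|\pmod p\in L$ for all $i\ne j$. Let $X=[n-1]$. Associate a variable $x_i$ to each $A_i$, and for each $I\subseteq X$ define the linear form over $\mathbb{F}_p$: $L_I=\sum_{i:\ I\subseteq A_i} x_i$. For $j\ge0$, $\mathbb{P}_j(X)$ is the set of $j$-element subsets of $X$. *)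

theory Defs
  imports Main "HOL-Library.Function_Algebras" "Berlekamp_Zassenhaus.Finite_Field"
begin

text \<open>Vectors of F_p^m are represented as functions nat => 'p mod_ring
  (coordinates 0..<m are the relevant ones); scalar multiplication is pointwise.\<close>

definition fscale :: "'a::field \<Rightarrow> (nat \<Rightarrow> 'a) \<Rightarrow> (nat \<Rightarrow> 'a)" where
  "fscale c v = (\<lambda>k. c * v k)"

text \<open>The linear form L_I = sum of x_k over k < m with I subset of A k, as its coefficient vector.\<close>
definition LForm :: "(nat \<Rightarrow> nat set) \<Rightarrow> nat \<Rightarrow> nat set \<Rightarrow> (nat \<Rightarrow> 'a::field)" where
  "LForm A m I = (\<lambda>k. if k < m \<and> I \<subseteq> A k then 1 else 0)"

definition spandim :: "(nat \<Rightarrow> 'a::field) set \<Rightarrow> nat" where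
  "spandim S = vector_space.dim fscale (module.span fscale S)"

end

theory Submission
  imports Defs
begin

(* Fix G \<subseteq> X with card G = g.  For every A_k \<supseteq> G the number x = card (X \<inter> A_k) - g is congruent
   to \<kappa> - g or \<kappa> - g - 1 modulo p for some \<kappa> \<in> K, so the degree-2r polynomial
   \<Prod>\<kappa>\<in>K (x - (\<kappa> - g)) (x - (\<kappa> - g - 1)) vanishes there.  Written in the binomial basis
   x choose e, with leading coefficient (2r)!, it becomes a linear relation among the sums of the
   L_H over the (g + e)-supersets H of G; since (2r)! is a unit mod p, the sum over the
   (g + 2r)-supersets lies in the span of the L_H with g \<le> card H < g + 2r.  When b < p and
   2b - 2r \<le> n - 1, the inclusion matrix of (b - 2r)-sets versus b-sets of X has full rank over
   F_p, so adjoining the b-th layer to the L_H with i \<le> card H < b raises the dimension by at most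
   C(n-1, b) - C(n-1, b-2r).  Summing over b = i + 2r, ..., s, the binomials telescope. *)

abbreviation supsets_of_card :: "'a set \<Rightarrow> 'a set \<Rightarrow> nat \<Rightarrow> 'a set set" where
  "supsets_of_card G S k \<equiv> {H. G \<subseteq> H \<and> H \<subseteq> S \<and> card H = k}"

lemma finite_supsets_of_card: "finite S \<Longrightarrow> finite (supsets_of_card G S k)"
  by (rule finite_subset[of _ "Pow S"]) auto

lemma card_supsets_of_card:
  assumes "finite S" "G \<subseteq> S" "card G \<le> k"
  shows "card (supsets_of_card G S k) = (card S - card G) choose (k - card G)"
proof -
  have fin: "finite G" "finite (S - G)"
    using assms finite_subset by auto
  have "supsets_of_card G S k = (\<lambda>E. G \<union> E) ` {E. E \<subseteq> S - G \<and> card E = k - card G}"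
  proof (intro equalityI subsetI)
    fix H assume H: "H \<in> supsets_of_card G S k"
    then have "card (H - G) = k - card G"
      using fin by (simp add: card_Diff_subset)
    with H show "H \<in> (\<lambda>E. G \<union> E) ` {E. E \<subseteq> S - G \<and> card E = k - card G}"
      by (intro image_eqI[of _ _ "H - G"]) auto
  next
    fix H assume "H \<in> (\<lambda>E. G \<union> E) ` {E. E \<subseteq> S - G \<and> card E = k - card G}"
    then obtain E where "E \<subseteq> S - G" "card E = k - card G" "H = G \<union> E"
      by auto
    moreover from this have "card H = card G + card E"
      using fin by (metis Diff_disjoint card_Un_disjoint disjoint_iff finite_subset subsetD)
    ultimately show "H \<in> supsets_of_card G S k"
      using assms by auto
  qed
  moreover have "inj_on (\<lambda>E. G \<union> E) {E. E \<subseteq> S - G \<and> card E = k - card G}"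
    by (auto simp: inj_on_def)
  ultimately show ?thesis
    using fin assms by (simp add: card_image n_subsets card_Diff_subset)
qed

lemma supsets_of_card_insert_insert:
  assumes "finite S" "x \<notin> S" "G \<subseteq> S"
  shows "supsets_of_card (insert x G) (insert x S) (Suc k) = insert x ` supsets_of_card G S k"
proof (intro equalityI subsetI)
  fix H assume H: "H \<in> supsets_of_card (insert x G) (insert x S) (Suc k)"
  then have "card (H - {x}) = k"
    by (auto simp: card_Diff_singleton_if)
  with H assms show "H \<in> insert x ` supsets_of_card G S k"
    by (intro image_eqI[of _ _ "H - {x}"]) auto
next
  fix H assume "H \<in> insert x ` supsets_of_card G S k"
  then obtain E where "G \<subseteq> E" "E \<subseteq> S" "card E = k" "H = insert x E"
    by auto
  moreover from this have "finite E" "x \<notin> E"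
    using assms finite_subset by blast+
  ultimately show "H \<in> supsets_of_card (insert x G) (insert x S) (Suc k)"
    by auto
qed

lemma sum_supsets_of_card_insert_insert:
  assumes "finite S" "x \<notin> S" "G \<subseteq> S"
  shows "(\<Sum>H\<in>supsets_of_card (insert x G) (insert x S) (Suc k). f H)
       = (\<Sum>H\<in>supsets_of_card G S k. f (insert x H))"
proof -
  have "inj_on (insert x) (supsets_of_card G S k)"
    using assms by (intro inj_onI) (metis Diff_insert_absorb subsetD mem_Collect_eq)
  then show ?thesis
    unfolding supsets_of_card_insert_insert[OF assms] by (simp add: sum.reindex)
qed

lemma supsets_of_card_insert:
  assumes "finite S" "x \<notin> S" "G \<subseteq> S"
  shows "supsets_of_card G (insert x S) (Suc k)
       = supsets_of_card G S (Suc k) \<union> insert x ` supsets_of_card G S k"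
  unfolding supsets_of_card_insert_insert[OF assms, symmetric] using assms by blast

lemma sum_supsets_of_card_insert:
  assumes "finite S" "x \<notin> S" "G \<subseteq> S"
  shows "(\<Sum>H\<in>supsets_of_card G (insert x S) (Suc k). f H)
       = (\<Sum>H\<in>supsets_of_card G S (Suc k). f H) + (\<Sum>H\<in>supsets_of_card G S k. f (insert x H))"
proof -
  have "supsets_of_card G (insert x S) (Suc k)
      = supsets_of_card G S (Suc k) \<union> supsets_of_card (insert x G) (insert x S) (Suc k)"
    using assms by blast
  moreover have "supsets_of_card G S (Suc k) \<inter> supsets_of_card (insert x G) (insert x S) (Suc k) = {}"
    using assms by blast
  ultimately have "(\<Sum>H\<in>supsets_of_card G (insert x S) (Suc k). f H)
      = (\<Sum>H\<in>supsets_of_card G S (Suc k). f H)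
      + (\<Sum>H\<in>supsets_of_card (insert x G) (insert x S) (Suc k). f H)"
    using assms by (simp only: sum.union_disjoint finite_supsets_of_card finite_insert)
  then show ?thesis
    unfolding sum_supsets_of_card_insert_insert[OF assms] .
qed

lemma sum_Pow_minus_one_power_card:
  assumes "finite T"
  shows "(\<Sum>E\<in>Pow T. (- 1 :: 'a::ring_1) ^ card E) = (if T = {} then 1 else 0)"
proof (cases "T = {}")
  case False
  then have "{} \<subset> T"
    by blast
  from card_subsupersets_even_odd[OF assms this]
  have "card {E. E \<in> Pow T \<and> even (card E)} = card {E. E \<in> Pow T \<and> odd (card E)}"
    by (simp add: Pow_def)
  with False show ?thesis
    using sum_alternating_cancels[of "Pow T" card] assms by simp
qed simp

lemma times_binomial_eq: "x * (x choose e) = Suc e * (x choose Suc e) + e * (x choose e)"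
proof (cases "e \<le> x")
  case True
  have "Suc e * (x choose Suc e) = (x - e) * (x choose e)"
    by (metis binomial_absorption binomial_absorb_comp)
  with True show ?thesis
    by (simp add: diff_mult_distrib)
qed (simp add: binomial_eq_0)

lemma prod_list_binomial_expansion:
  fixes \<gamma>s :: "'a::comm_ring_1 list"
  shows "\<exists>c. c (length \<gamma>s) = of_nat (fact (length \<gamma>s)) \<and>
    (\<forall>x::nat. (\<Prod>\<gamma>\<leftarrow>\<gamma>s. of_nat x - \<gamma>) = (\<Sum>e\<le>length \<gamma>s. c e * of_nat (x choose e)))"
proof (induction \<gamma>s)
  case Nil
  show ?case
    by (intro exI[of _ "\<lambda>_. 1"]) simp
next
  case (Cons \<gamma> \<gamma>s)
  define d where "d = length \<gamma>s"
  obtain c where c: "c d = of_nat (fact d)"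
    "\<And>x::nat. (\<Prod>\<gamma>\<leftarrow>\<gamma>s. of_nat x - \<gamma>) = (\<Sum>e\<le>d. c e * of_nat (x choose e))"
    using Cons d_def by blast
  \<comment> \<open>multiply by \<open>of_nat x - \<gamma>\<close> and use \<open>x * (x choose e) = (e + 1) * (x choose (e + 1)) + e * (x choose e)\<close>\<close>
  define c' where
    "c' e = (if e = 0 then 0 else of_nat e * c (e - 1)) + (of_nat e - \<gamma>) * (if e \<le> d then c e else 0)"
    for e
  have "(\<Prod>\<gamma>\<leftarrow>\<gamma> # \<gamma>s. of_nat x - \<gamma>) = (\<Sum>e\<le>Suc d. c' e * of_nat (x choose e))" for x :: nat
  proof -
    have x_binomial: "of_nat x * of_nat (x choose e)
        = of_nat (Suc e) * of_nat (x choose Suc e) + of_nat e * (of_nat (x choose e) :: 'a)" for e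
      using arg_cong[OF times_binomial_eq[of x e], of "of_nat :: nat \<Rightarrow> 'a"] by (simp add: algebra_simps)
    have "(\<Prod>\<gamma>\<leftarrow>\<gamma> # \<gamma>s. of_nat x - \<gamma>)
        = (\<Sum>e\<le>d. c e * (of_nat x * of_nat (x choose e)) - \<gamma> * c e * of_nat (x choose e))"
      using c(2)[of x] by (simp add: sum_distrib_left algebra_simps sum_subtractf)
    also have "\<dots> = (\<Sum>e\<le>d. of_nat (Suc e) * c e * of_nat (x choose Suc e))
        + (\<Sum>e\<le>d. (of_nat e - \<gamma>) * c e * of_nat (x choose e))"
      unfolding x_binomial by (simp add: algebra_simps sum.distrib sum_subtractf)
    also have "(\<Sum>e\<le>d. of_nat (Suc e) * c e * of_nat (x choose Suc e))
        = (\<Sum>e\<le>Suc d. (if e = 0 then 0 else of_nat e * c (e - 1)) * of_nat (x choose e))"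
      by (subst sum.atMost_Suc_shift) simp
    also have "(\<Sum>e\<le>d. (of_nat e - \<gamma>) * c e * of_nat (x choose e))
        = (\<Sum>e\<le>Suc d. (of_nat e - \<gamma>) * (if e \<le> d then c e else 0) * of_nat (x choose e))"
      by (simp add: sum.atMost_Suc)
    finally show ?thesis
      by (simp add: c'_def sum.distrib[symmetric] algebra_simps)
  qed
  moreover have "c' (Suc d) = of_nat (fact (Suc d))"
    using c(1) by (simp add: c'_def algebra_simps)
  ultimately show ?case
    by (intro exI[of _ c']) (simp add: d_def)
qed

lemma telescoping_sliding_window:
  fixes f g :: "nat \<Rightarrow> nat"
  assumes "\<And>b. a + d \<le> b \<Longrightarrow> b < a + d + t \<Longrightarrow> f (Suc b) + g (b - d) \<le> f b + g b"
  shows "f (a + d + t) + (\<Sum>j\<in>{a..<a + d}. g j) \<le> f (a + d) + (\<Sum>j\<in>{a + t..<a + t + d}. g j)"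
  using assms
proof (induction t)
  case (Suc t)
  have "f (a + d + Suc t) + g (a + t) \<le> f (a + d + t) + g (a + d + t)"
    using Suc.prems[of "a + d + t"] by simp
  moreover have "(\<Sum>j\<in>{a + t..<a + t + d}. g j) + g (a + d + t) = g (a + t) + (\<Sum>j\<in>{a + Suc t..<a + Suc t + d}. g j)"
    by (simp add: sum.atLeastLessThan_Suc sum.atLeast_Suc_lessThan add_ac)
  ultimately show ?case
    using Suc by fastforce
qed simp

context vector_space
begin

lemma span_scale_iff: "c \<noteq> 0 \<Longrightarrow> scale c x \<in> span S \<longleftrightarrow> x \<in> span S"
  by (metis span_scale scale_scale left_inverse scale_one)

lemma dim_le_dim_plus_card:
  assumes "finite A" "finite C" "V \<subseteq> span (A \<union> C)"
  shows "dim V \<le> dim A + card C"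
proof -
  obtain B where B: "B \<subseteq> A" "independent B" "A \<subseteq> span B" "card B = dim A"
    by (rule basis_exists)
  have "A \<union> C \<subseteq> span (B \<union> C)"
    using B(3) span_mono[of B "B \<union> C"] span_superset[of "B \<union> C"] by auto
  then have "span (A \<union> C) \<subseteq> span (B \<union> C)"
    by (simp add: span_minimal)
  then have "dim V \<le> card (B \<union> C)"
    using assms B(1) finite_subset by (intro dim_le_card) auto
  also have "\<dots> \<le> dim A + card C"
    using B(4) card_Un_le by metis
  finally show ?thesis .
qed

lemma dim_Un_le_of_sum_in_span:
  assumes "finite B" "finite L" "L \<noteq> {}" "(\<Sum>H\<in>L. \<Phi> H) \<in> span B"
  shows "dim (B \<union> \<Phi> ` L) + 1 \<le> dim B + card L"
proof -
  obtain H0 where H0: "H0 \<in> L"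
    using assms(3) by blast
  let ?C = "\<Phi> ` (L - {H0})"
  have "\<Phi> H0 = (\<Sum>H\<in>L. \<Phi> H) - (\<Sum>H\<in>L - {H0}. \<Phi> H)"
    using H0 assms(2) by (simp add: sum.remove)
  moreover have "(\<Sum>H\<in>L. \<Phi> H) \<in> span (B \<union> ?C)"
    using assms(4) span_mono[of B "B \<union> ?C"] by blast
  moreover have "(\<Sum>H\<in>L - {H0}. \<Phi> H) \<in> span (B \<union> ?C)"
    by (intro span_sum span_base) auto
  ultimately have "\<Phi> H0 \<in> span (B \<union> ?C)"
    by (simp add: span_diff)
  then have "B \<union> \<Phi> ` L \<subseteq> span (B \<union> ?C)"
    by (auto intro: span_base)
  then have "dim (B \<union> \<Phi> ` L) \<le> dim B + card ?C"
    using assms by (intro dim_le_dim_plus_card) auto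
  moreover have "card ?C < card L"
    using card_image_le[of "L - {H0}" \<Phi>] card_Diff1_less[OF assms(2) H0] assms(2) by simp
  ultimately show ?thesis
    by linarith
qed

lemma in_span_of_relation:
  fixes d :: nat
  assumes "(\<Sum>e\<le>d. scale (c e) (v e)) = 0" "c d \<noteq> 0" "\<And>e. e < d \<Longrightarrow> v e \<in> span B"
  shows "v d \<in> span B"
proof -
  have "{..d} = insert d {..<d}"
    by auto
  then have "scale (c d) (v d) = - (\<Sum>e<d. scale (c e) (v e))"
    using assms(1) by (simp add: eq_neg_iff_add_eq_0)
  also have "\<dots> \<in> span B"
    using assms(3) by (intro span_neg span_sum span_scale) auto
  finally show ?thesis
    using assms(2) span_scale_iff by blast
qed

lemma supset_sum_in_span_of_card_le:
  fixes \<Phi> :: "'c set \<Rightarrow> 'b"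
  assumes "finite S" "G \<subseteq> S" "card G \<le> a" "a \<le> b"
    and nz: "of_nat ((b - card G) choose (a - card G)) \<noteq> (0::'a)"
    and rel: "\<And>G'. G' \<subseteq> S \<Longrightarrow> card G' = a \<Longrightarrow> (\<Sum>H\<in>supsets_of_card G' S b. \<Phi> H) \<in> span B"
  shows "(\<Sum>H\<in>supsets_of_card G S b. \<Phi> H) \<in> span B"
proof -
  let ?c = "of_nat ((b - card G) choose (a - card G)) :: 'a"
  have "(\<Sum>G'\<in>supsets_of_card G S a. \<Sum>H\<in>supsets_of_card G' S b. \<Phi> H) \<in> span B"
    by (intro span_sum rel) auto
  moreover have "(\<Sum>G'\<in>supsets_of_card G S a. \<Sum>H\<in>supsets_of_card G' S b. \<Phi> H)
      = (\<Sum>G'\<in>supsets_of_card G S a. \<Sum>H\<in>{H \<in> supsets_of_card G S b. G' \<subseteq> H}. \<Phi> H)"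
    by (intro sum.cong refl arg_cong[where f="\<lambda>X. sum \<Phi> X"]) auto
  also have "\<dots> = (\<Sum>H\<in>supsets_of_card G S b. \<Sum>G'\<in>{G' \<in> supsets_of_card G S a. G' \<subseteq> H}. \<Phi> H)"
    using assms(1) by (intro sum.swap_restrict finite_supsets_of_card)
  also have "\<dots> = (\<Sum>H\<in>supsets_of_card G S b. scale ?c (\<Phi> H))"
  proof (intro sum.cong refl)
    fix H assume H: "H \<in> supsets_of_card G S b"
    then have "{G' \<in> supsets_of_card G S a. G' \<subseteq> H} = supsets_of_card G H a"
      by auto
    moreover have "card (supsets_of_card G H a) = (b - card G) choose (a - card G)"
      using H assms(1,3) finite_subset by (subst card_supsets_of_card) auto
    ultimately show "(\<Sum>G'\<in>{G' \<in> supsets_of_card G S a. G' \<subseteq> H}. \<Phi> H) = scale ?c (\<Phi> H)"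
      by (simp add: sum_constant_scale)
  qed
  also have "\<dots> = scale ?c (\<Sum>H\<in>supsets_of_card G S b. \<Phi> H)"
    by (simp add: scale_sum_right)
  finally show ?thesis
    using nz span_scale_iff by simp
qed

lemma in_span_of_square_inclusion_relations:
  fixes \<Phi> :: "'c set \<Rightarrow> 'b"
  assumes "finite S" "a \<le> b" "a + b = card S"
    and nz: "\<And>x y. y \<le> x \<Longrightarrow> x \<le> b \<Longrightarrow> of_nat (x choose y) \<noteq> (0::'a)"
    and rel: "\<And>G. G \<subseteq> S \<Longrightarrow> card G = a \<Longrightarrow> (\<Sum>H\<in>supsets_of_card G S b. \<Phi> H) \<in> span B"
    and H0: "H0 \<subseteq> S" "card H0 = b"
  shows "\<Phi> H0 \<in> span B"
proof -
  \<comment> \<open>inclusion-exclusion over the subsets of \<open>D = S - H0\<close>: only \<open>H = H0\<close> survives\<close>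
  define D where "D = S - H0"
  have D: "finite D" "D \<subseteq> S" "card D = a"
    using assms by (auto simp: D_def card_Diff_subset finite_subset)
  let ?L = "{H. H \<subseteq> S \<and> card H = b}"
  let ?v = "\<lambda>E. scale ((- 1) ^ card E) (\<Sum>H\<in>supsets_of_card E S b. \<Phi> H)"
  have "?v E \<in> span B" if "E \<in> Pow D" for E
  proof -
    have "E \<subseteq> S" "card E \<le> a"
      using that D card_mono by auto
    then show ?thesis
      using nz assms(2)
      by (intro span_scale supset_sum_in_span_of_card_le[OF assms(1) _ _ assms(2) _ rel]) auto
  qed
  then have span: "(\<Sum>E\<in>Pow D. ?v E) \<in> span B"
    by (rule span_sum)
  have "supsets_of_card E S b = {H \<in> ?L. E \<subseteq> H}" for E
    by blast
  then have "(\<Sum>E\<in>Pow D. ?v E) = (\<Sum>E\<in>Pow D. \<Sum>H\<in>{H \<in> ?L. E \<subseteq> H}. scale ((- 1) ^ card E) (\<Phi> H))"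
    by (simp only: scale_sum_right)
  also have "\<dots> = (\<Sum>H\<in>?L. \<Sum>E\<in>{E \<in> Pow D. E \<subseteq> H}. scale ((- 1) ^ card E) (\<Phi> H))"
    using D(1) assms(1) by (intro sum.swap_restrict finite_subset[of ?L "Pow S"]) auto
  also have "\<dots> = (\<Sum>H\<in>?L. scale (\<Sum>E\<in>Pow (D \<inter> H). (- 1) ^ card E) (\<Phi> H))"
  proof -
    have "{E \<in> Pow D. E \<subseteq> H} = Pow (D \<inter> H)" for H
      by blast
    then show ?thesis
      by (simp only: scale_sum_left)
  qed
  also have "\<dots> = (\<Sum>H\<in>?L. if H = H0 then \<Phi> H else 0)"
  proof (intro sum.cong refl)
    fix H assume H: "H \<in> ?L"
    have "D \<inter> H = {} \<longleftrightarrow> H = H0"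
    proof
      assume "D \<inter> H = {}"
      then have "H \<subseteq> H0"
        using H by (auto simp: D_def)
      moreover have "finite H0"
        using H0(1) assms(1) finite_subset by blast
      ultimately show "H = H0"
        using H H0(2) card_subset_eq by auto
    qed (auto simp: D_def)
    then have "(\<Sum>E\<in>Pow (D \<inter> H). (- 1) ^ card E) = (if H = H0 then 1 else (0::'a))"
      using D(1) sum_Pow_minus_one_power_card[of "D \<inter> H"] by (simp del: Pow_Int_eq)
    then show "scale (\<Sum>E\<in>Pow (D \<inter> H). (- 1) ^ card E) (\<Phi> H) = (if H = H0 then \<Phi> H else 0)"
      by simp
  qed
  also have "\<dots> = \<Phi> H0"
    using H0 assms(1) by (simp add: sum.delta)
  finally show ?thesis
    using span by simp
qed

lemma inclusion_relations_insert_link: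
  assumes "finite S" "x \<notin> S" "G \<subseteq> S" "card G = a"
    and rel: "\<And>G. G \<subseteq> insert x S \<Longrightarrow> card G = Suc a
      \<Longrightarrow> (\<Sum>H\<in>supsets_of_card G (insert x S) (Suc b). \<Phi> H) \<in> span B"
  shows "(\<Sum>H\<in>supsets_of_card G S b. \<Phi> (insert x H)) \<in> span B"
proof -
  have "card (insert x G) = Suc a"
    using assms finite_subset by (metis card_insert_disjoint subsetD)
  then show ?thesis
    using rel[of "insert x G"] assms(3)
    unfolding sum_supsets_of_card_insert_insert[OF assms(1-3), where f=\<Phi> and k=b] by blast
qed

lemma inclusion_relations_insert_restrict:
  assumes "finite S" "x \<notin> S" "G \<subseteq> S" "card G = a"
    and rel: "\<And>G. G \<subseteq> insert x S \<Longrightarrow> card G = a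
      \<Longrightarrow> (\<Sum>H\<in>supsets_of_card G (insert x S) (Suc b). \<Phi> H) \<in> span B"
  shows "(\<Sum>H\<in>supsets_of_card G S (Suc b). \<Phi> H)
    \<in> span (B \<union> (\<lambda>H. \<Phi> (insert x H)) ` {H. H \<subseteq> S \<and> card H = b})"
    (is "_ \<in> span ?B'")
proof -
  have "(\<Sum>H\<in>supsets_of_card G (insert x S) (Suc b). \<Phi> H) \<in> span ?B'"
    using rel[of G] assms(3,4) span_mono[of B ?B'] by auto
  moreover have "(\<Sum>H\<in>supsets_of_card G S b. \<Phi> (insert x H)) \<in> span ?B'"
    by (intro span_sum span_base) auto
  ultimately show ?thesis
    using sum_supsets_of_card_insert[OF assms(1-3), where f=\<Phi> and k=b] span_diff by fastforce
qed

lemma dim_Un_layer_le_of_sum_in_span: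
  assumes "finite S" "finite B" "b \<le> card S" "(\<Sum>H\<in>{H. H \<subseteq> S \<and> card H = b}. \<Phi> H) \<in> span B"
  shows "dim (B \<union> \<Phi> ` {H. H \<subseteq> S \<and> card H = b}) + 1 \<le> dim B + (card S choose b)"
proof -
  let ?L = "{H. H \<subseteq> S \<and> card H = b}"
  have "finite ?L" "card ?L = card S choose b"
    using assms(1) by (simp_all add: n_subsets)
  moreover from this have "?L \<noteq> {}"
    using assms(3) zero_less_binomial[of b "card S"] by (metis card.empty less_irrefl)
  ultimately show ?thesis
    using dim_Un_le_of_sum_in_span[OF assms(2) _ _ assms(4)] by simp
qed

lemma dim_Un_layer_le_of_square_inclusion_relations:
  fixes \<Phi> :: "'c set \<Rightarrow> 'b"
  assumes "finite S" "finite B" "a \<le> b" "a + b = card S"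
    and "\<And>x y. y \<le> x \<Longrightarrow> x \<le> b \<Longrightarrow> of_nat (x choose y) \<noteq> (0::'a)"
    and "\<And>G. G \<subseteq> S \<Longrightarrow> card G = a \<Longrightarrow> (\<Sum>H\<in>supsets_of_card G S b. \<Phi> H) \<in> span B"
  shows "dim (B \<union> \<Phi> ` {H. H \<subseteq> S \<and> card H = b}) + (card S choose a) \<le> dim B + (card S choose b)"
proof -
  have "\<Phi> ` {H. H \<subseteq> S \<and> card H = b} \<subseteq> span B"
    using in_span_of_square_inclusion_relations[OF assms(1,3-6)] by blast
  then have "B \<union> \<Phi> ` {H. H \<subseteq> S \<and> card H = b} \<subseteq> span B"
    by (simp add: span_superset)
  then have "dim (B \<union> \<Phi> ` {H. H \<subseteq> S \<and> card H = b}) \<le> dim B"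
    using dim_le_dim_plus_card[of B "{}"] assms(2) by simp
  moreover have "card S choose a = card S choose b"
    using assms(4) binomial_symmetric[of a "card S"] by (metis add_diff_cancel_left' le_add1)
  ultimately show ?thesis
    by simp
qed

(* The dual form of the full rank of the inclusion matrix of a-sets versus b-sets of S over a field
   in which no binomial coefficient below b vanishes: the relations cut the contribution of the
   b-th layer to the dimension by card S choose a. *)
lemma dim_Un_layer_le_of_inclusion_relations:
  fixes \<Phi> :: "'c set \<Rightarrow> 'b"
  assumes "finite S" "finite B" "a \<le> b" "a + b \<le> card S"
    and "\<And>x y. y \<le> x \<Longrightarrow> x \<le> b \<Longrightarrow> of_nat (x choose y) \<noteq> (0::'a)"
    and "\<And>G. G \<subseteq> S \<Longrightarrow> card G = a \<Longrightarrow> (\<Sum>H\<in>supsets_of_card G S b. \<Phi> H) \<in> span B"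
  shows "dim (B \<union> \<Phi> ` {H. H \<subseteq> S \<and> card H = b}) + (card S choose a) \<le> dim B + (card S choose b)"
  using assms
proof (induction S arbitrary: a b \<Phi> B rule: finite_induct)
  case empty
  then have "a = 0" "b = 0"
    by auto
  moreover have "(\<Sum>H\<in>{H. H \<subseteq> {} \<and> card H = b}. \<Phi> H) \<in> span B"
    using empty.prems(5)[of "{}"] \<open>a = 0\<close> by simp
  ultimately show ?case
    using dim_Un_layer_le_of_sum_in_span[of "{}" B b \<Phi>] empty.prems(1) by simp
next
  case (insert x S)
  have card_insert: "card (insert x S) = Suc (card S)"
    using insert.hyps by simp
  consider (zero) "a = 0" | (square) "a + b = card (insert x S)"
    | (step) a' b' where "a = Suc a'" "b = Suc b'" "a + b \<le> card S"
  proof (cases a)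
    case (Suc a')
    moreover obtain b' where "b = Suc b'"
      using Suc insert.prems(2) Suc_le_D by blast
    ultimately show ?thesis
      using that(2,3) insert.prems(3) card_insert by (metis le_SucE)
  qed (use that(1) in blast)
  then show ?case
  proof cases
    case zero
    have "finite (insert x S)" "b \<le> card (insert x S)"
      using insert.hyps(1) insert.prems(3) zero by simp_all
    moreover have "(\<Sum>H\<in>{H. H \<subseteq> insert x S \<and> card H = b}. \<Phi> H) \<in> span B"
      using insert.prems(5)[of "{}"] zero by simp
    ultimately have "dim (B \<union> \<Phi> ` {H. H \<subseteq> insert x S \<and> card H = b}) + 1
        \<le> dim B + (card (insert x S) choose b)"
      using insert.prems(1) by (intro dim_Un_layer_le_of_sum_in_span)
    with zero show ?thesis
      by simp
  next
    case square
    show ?thesis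
      using insert.hyps(1) insert.prems(1,2,4,5) square
      by (intro dim_Un_layer_le_of_square_inclusion_relations) simp_all
  next
    case step
    \<comment> \<open>the \<open>b\<close>-sets through \<open>x\<close> form the \<open>(a - 1, b - 1)\<close> problem on \<open>S\<close>,
      the others the \<open>(a, b)\<close> problem on \<open>S\<close> modulo the first ones\<close>
    define B1 where "B1 = B \<union> (\<lambda>H. \<Phi> (insert x H)) ` {H. H \<subseteq> S \<and> card H = b'}"
    have "finite B1"
      using insert.hyps insert.prems(1) by (simp add: B1_def)
    have "dim B1 + (card S choose a') \<le> dim B + (card S choose b')"
    proof (unfold B1_def, rule insert.IH)
      fix G assume "G \<subseteq> S" "card G = a'"
      then show "(\<Sum>H\<in>supsets_of_card G S b'. \<Phi> (insert x H)) \<in> span B"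
        by (rule inclusion_relations_insert_link[OF insert.hyps(1,2) _ _ insert.prems(5)[unfolded step(1,2)]])
    qed (use insert.prems step in auto)
    moreover have "dim (B1 \<union> \<Phi> ` {H. H \<subseteq> S \<and> card H = b}) + (card S choose a) \<le> dim B1 + (card S choose b)"
    proof (rule insert.IH)
      fix G assume "G \<subseteq> S" "card G = a"
      then show "(\<Sum>H\<in>supsets_of_card G S b. \<Phi> H) \<in> span B1"
        unfolding B1_def step(2)
        by (rule inclusion_relations_insert_restrict[OF insert.hyps(1,2) _ _ insert.prems(5)[unfolded step(2)]])
    qed (use \<open>finite B1\<close> insert.prems step in auto)
    moreover have "B \<union> \<Phi> ` {H. H \<subseteq> insert x S \<and> card H = b} = B1 \<union> \<Phi> ` {H. H \<subseteq> S \<and> card H = b}"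
      using supsets_of_card_insert[OF insert.hyps(1,2) empty_subsetI, of b'] step
      by (auto simp: B1_def)
    ultimately show ?thesis
      using step card_insert by simp
  qed
qed

end

interpretation fv: vector_space "fscale :: 'a::field \<Rightarrow> (nat \<Rightarrow> 'a) \<Rightarrow> _"
  by unfold_locales (auto simp: fscale_def fun_eq_iff algebra_simps)

lemma of_nat_fact_mod_ring_neq_0:
  assumes "x < CARD('p::prime_card)"
  shows "(of_nat (fact x) :: 'p mod_ring) \<noteq> 0"
proof
  assume "(of_nat (fact x) :: 'p mod_ring) = 0"
  then have "CARD('p) dvd fact x"
    by (rule of_nat_0_mod_ring_dvd)
  with assms show False
    using prime_dvd_fact_iff[OF prime_card[where 'a='p]] by auto
qed

lemma of_nat_binomial_mod_ring_neq_0: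
  assumes "x < CARD('p::prime_card)" "y \<le> x"
  shows "(of_nat (x choose y) :: 'p mod_ring) \<noteq> 0"
  using of_nat_fact_mod_ring_neq_0[OF assms(1)] binomial_fact_lemma[OF assms(2)]
  by (metis mult_zero_right of_nat_mult)

lemma sum_fun_apply: "(sum f A) k = (\<Sum>x\<in>A. f x k)"
  by (induction A rule: infinite_finite_induct) auto

lemma sum_LForm_supsets_apply:
  assumes "finite X" "G \<subseteq> X"
  shows "(\<Sum>H\<in>supsets_of_card G X (card G + e). LForm A m H k)
       = (if k < m \<and> G \<subseteq> A k then of_nat ((card (X \<inter> A k) - card G) choose e) else (0::'a::field))"
proof (cases "k < m \<and> G \<subseteq> A k")
  case True
  then have "(\<Sum>H\<in>supsets_of_card G X (card G + e). LForm A m H k)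
      = (\<Sum>H\<in>supsets_of_card G X (card G + e). if H \<subseteq> A k then 1 else (0::'a))"
    by (simp add: LForm_def)
  also have "\<dots> = of_nat (card {H \<in> supsets_of_card G X (card G + e). H \<subseteq> A k})"
    using assms(1) by (simp add: sum.If_cases Int_def finite_supsets_of_card)
  also have "{H \<in> supsets_of_card G X (card G + e). H \<subseteq> A k} = supsets_of_card G (X \<inter> A k) (card G + e)"
    by auto
  also have "card \<dots> = (card (X \<inter> A k) - card G) choose e"
    using True assms by (subst card_supsets_of_card) auto
  finally show ?thesis
    using True by simp
next
  case False
  have "LForm A m H k = (0::'a)" if "G \<subseteq> H" for H
    using False that unfolding LForm_def by (metis subset_trans)
  then have "(\<Sum>H\<in>supsets_of_card G X (card G + e). LForm A m H k) = (0::'a)"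
    by (intro sum.neutral) blast
  then show ?thesis
    unfolding if_not_P[OF False] .
qed

lemma of_nat_card_Int_diff_mem:
  fixes A :: "nat set"
  assumes "A \<subseteq> {1..n}" "G \<subseteq> {1..n-1}" "G \<subseteq> A" "card A mod CARD('p::prime_card) = \<kappa>"
  shows "(of_nat (card ({1..n-1} \<inter> A) - card G) :: 'p mod_ring)
    \<in> {of_nat \<kappa> - of_nat (card G), of_nat \<kappa> - of_nat (card G) - 1}"
proof -
  let ?y = "card ({1..n-1} \<inter> A)"
  have "finite A"
    using assms(1) finite_subset[OF _ finite_atLeastAtMost] by blast
  moreover have "{1..n-1} \<inter> A = A - {n}"
    using assms(1) by (auto simp: subset_iff)
  ultimately have "?y = card A \<or> Suc ?y = card A"
    by (metis card_Diff_singleton_if card_Suc_Diff1)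
  then have "(of_nat (card A) :: 'p mod_ring) \<in> {of_nat ?y, 1 + of_nat ?y}"
    by (auto simp flip: of_nat_Suc)
  moreover have "(of_nat (card A) :: 'p mod_ring) = of_nat \<kappa>"
    using of_nat_mod_CHAR[of "card A", where 'a="'p mod_ring"] assms(4) by simp
  moreover have "card G \<le> ?y"
    using assms(2,3) by (intro card_mono) auto
  then have "(of_nat (?y - card G) :: 'p mod_ring) = of_nat ?y - of_nat (card G)"
    by (rule of_nat_diff)
  ultimately show ?thesis
    by (auto simp: algebra_simps)
qed

lemma LForm_supsets_relation:
  fixes A :: "nat \<Rightarrow> nat set" and K :: "nat set"
  assumes "finite K" and A_sub: "\<And>k. k < m \<Longrightarrow> A k \<subseteq> {1..n}"
    and A_card: "\<And>k. k < m \<Longrightarrow> card (A k) mod CARD('p) \<in> K"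
    and G: "G \<subseteq> {1..n-1}"
  obtains c :: "nat \<Rightarrow> 'p::prime_card mod_ring" where "c (2 * card K) = of_nat (fact (2 * card K))"
    and "(\<Sum>e\<le>2 * card K. fscale (c e) (\<Sum>H\<in>supsets_of_card G {1..n-1} (card G + e). LForm A m H)) = 0"
proof -
  let ?g = "of_nat (card G) :: 'p mod_ring"
  \<comment> \<open>a list, not a set: coinciding roots must be kept so that the degree is \<open>2 * card K\<close>\<close>
  define \<gamma>s where
    "\<gamma>s = concat (map (\<lambda>\<kappa>. [of_nat \<kappa> - ?g, of_nat \<kappa> - ?g - 1]) (sorted_list_of_set K))"
  have "length \<gamma>s = 2 * card K"
    unfolding \<gamma>s_def by (simp add: length_concat o_def sum_list_triv)
  then obtain c where c: "c (2 * card K) = of_nat (fact (2 * card K))"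
      "\<And>x::nat. (\<Prod>\<gamma>\<leftarrow>\<gamma>s. of_nat x - \<gamma>) = (\<Sum>e\<le>2 * card K. c e * of_nat (x choose e))"
    using prod_list_binomial_expansion[of \<gamma>s] by auto
  have root: "(\<Sum>e\<le>2 * card K. c e * of_nat ((card ({1..n-1} \<inter> A k) - card G) choose e)) = 0"
    if k: "k < m" "G \<subseteq> A k" for k
  proof -
    define \<kappa> where "\<kappa> = card (A k) mod CARD('p)"
    have "(of_nat (card ({1..n-1} \<inter> A k) - card G) :: 'p mod_ring) \<in> {of_nat \<kappa> - ?g, of_nat \<kappa> - ?g - 1}"
      using A_sub[OF k(1)] G k(2) \<kappa>_def[symmetric] by (rule of_nat_card_Int_diff_mem)
    moreover have "\<kappa> \<in> K"
      using A_card[OF k(1)] by (simp add: \<kappa>_def)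
    ultimately have "(\<Prod>\<gamma>\<leftarrow>\<gamma>s. of_nat (card ({1..n-1} \<inter> A k) - card G) - \<gamma>) = 0"
      using assms(1) by (force simp: \<gamma>s_def prod_list_zero_iff)
    then show ?thesis
      using c(2) by simp
  qed
  have "(\<Sum>e\<le>2 * card K. fscale (c e) (\<Sum>H\<in>supsets_of_card G {1..n-1} (card G + e). LForm A m H)) k = 0"
    for k
  proof (cases "k < m \<and> G \<subseteq> A k")
    case True
    then show ?thesis
      using root[of k] G by (simp add: sum_fun_apply fscale_def sum_LForm_supsets_apply)
  next
    case False
    then show ?thesis
      using G by (simp add: sum_fun_apply fscale_def sum_LForm_supsets_apply if_not_P[OF False])
  qed
  then show ?thesis
    using that[of c] c(1) by (simp add: fun_eq_iff)
qed

lemma LForm_top_layer_in_span: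
  fixes A :: "nat \<Rightarrow> nat set" and K :: "nat set"
  assumes "finite K" "\<And>k. k < m \<Longrightarrow> A k \<subseteq> {1..n}"
    and "\<And>k. k < m \<Longrightarrow> card (A k) mod CARD('p::prime_card) \<in> K"
    and "G \<subseteq> {1..n-1}" "card G + 2 * card K < CARD('p)"
  shows "(\<Sum>H\<in>supsets_of_card G {1..n-1} (card G + 2 * card K). LForm A m H :: nat \<Rightarrow> 'p mod_ring)
    \<in> fv.span (LForm A m ` {H. H \<subseteq> {1..n-1} \<and> card G \<le> card H \<and> card H < card G + 2 * card K})"
proof -
  obtain c :: "nat \<Rightarrow> 'p mod_ring" where c: "c (2 * card K) = of_nat (fact (2 * card K))"
    "(\<Sum>e\<le>2 * card K. fscale (c e) (\<Sum>H\<in>supsets_of_card G {1..n-1} (card G + e). LForm A m H)) = 0"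
    by (rule LForm_supsets_relation[OF assms(1-4)])
  have "c (2 * card K) \<noteq> 0"
    unfolding c(1) using assms(5) by (intro of_nat_fact_mod_ring_neq_0) simp
  with c(2) show ?thesis
  proof (rule fv.in_span_of_relation)
    fix e assume e: "e < 2 * card K"
    show "(\<Sum>H\<in>supsets_of_card G {1..n-1} (card G + e). LForm A m H)
      \<in> fv.span (LForm A m ` {H. H \<subseteq> {1..n-1} \<and> card G \<le> card H \<and> card H < card G + 2 * card K})"
      by (rule fv.span_sum, rule fv.span_base) (use e in auto)
  qed
qed

lemma spandim_LForm_step:
  fixes A :: "nat \<Rightarrow> nat set" and K :: "nat set"
  assumes "finite K" "\<And>k. k < m \<Longrightarrow> A k \<subseteq> {1..n}"
    and "\<And>k. k < m \<Longrightarrow> card (A k) mod CARD('p::prime_card) \<in> K"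
    and "i + 2 * card K \<le> b" "b < CARD('p)" "2 * b \<le> n - 1 + 2 * card K"
  shows "spandim (LForm A m ` {H. H \<subseteq> {1..n-1} \<and> i \<le> card H \<and> card H < Suc b} :: (nat \<Rightarrow> 'p mod_ring) set)
      + ((n - 1) choose (b - 2 * card K))
    \<le> spandim (LForm A m ` {H. H \<subseteq> {1..n-1} \<and> i \<le> card H \<and> card H < b} :: (nat \<Rightarrow> 'p mod_ring) set)
      + ((n - 1) choose b)"
proof -
  let ?X = "{1..n-1}"
  let ?gens = "\<lambda>t. LForm A m ` {H. H \<subseteq> ?X \<and> i \<le> card H \<and> card H < t} :: (nat \<Rightarrow> 'p mod_ring) set"
  have "{H. H \<subseteq> ?X \<and> i \<le> card H \<and> card H < Suc b}
      = {H. H \<subseteq> ?X \<and> i \<le> card H \<and> card H < b} \<union> {H. H \<subseteq> ?X \<and> card H = b}"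
    using assms(4) by auto
  then have "?gens (Suc b) = ?gens b \<union> LForm A m ` {H. H \<subseteq> ?X \<and> card H = b}"
    by (simp only: image_Un)
  moreover have "fv.dim (?gens b \<union> LForm A m ` {H. H \<subseteq> ?X \<and> card H = b}) + (card ?X choose (b - 2 * card K))
      \<le> fv.dim (?gens b) + (card ?X choose b)"
  proof (rule fv.dim_Un_layer_le_of_inclusion_relations)
    show "finite ?X" "b - 2 * card K \<le> b"
      by simp_all
    show "finite (?gens b)"
      by (rule finite_imageI, rule finite_subset[of _ "Pow ?X"]) auto
    show "b - 2 * card K + b \<le> card ?X"
      using assms(4,6) by simp
    show "of_nat (x choose y) \<noteq> (0::'p mod_ring)" if "y \<le> x" "x \<le> b" for x y
      using that assms(5) by (intro of_nat_binomial_mod_ring_neq_0) auto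
  next
    fix G assume G: "G \<subseteq> ?X" "card G = b - 2 * card K"
    then have "card G + 2 * card K = b"
      using assms(4) by simp
    then have "(\<Sum>H\<in>supsets_of_card G ?X b. LForm A m H :: nat \<Rightarrow> 'p mod_ring)
        \<in> fv.span (LForm A m ` {H. H \<subseteq> ?X \<and> card G \<le> card H \<and> card H < b})"
      using LForm_top_layer_in_span[where A=A and m=m and G=G, OF assms(1-3) G(1)] assms(5) by simp
    also have "\<dots> \<subseteq> fv.span (?gens b)"
      using G assms(4) by (intro fv.span_mono) auto
    finally show "(\<Sum>H\<in>supsets_of_card G ?X b. LForm A m H) \<in> fv.span (?gens b)" .
  qed
  ultimately show ?thesis
    by (simp add: spandim_def)
qed

lemma spandim_LForm_mono:
  assumes "finite X" "t \<le> t'"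
  shows "spandim (LForm A m ` {H. H \<subseteq> X \<and> i \<le> card H \<and> card H < t} :: (nat \<Rightarrow> 'a::field) set)
    \<le> spandim (LForm A m ` {H. H \<subseteq> X \<and> i \<le> card H \<and> card H < t'} :: (nat \<Rightarrow> 'a) set)"
    (is "spandim ?S \<le> spandim ?T")
proof -
  have "finite {H. H \<subseteq> X \<and> i \<le> card H \<and> card H < t'}"
    by (rule finite_subset[of _ "Pow X"]) (use assms(1) in auto)
  then have "finite ?T"
    by (rule finite_imageI)
  moreover have "?S \<subseteq> fv.span (?T \<union> {})"
    using assms(2) by (auto intro: fv.span_base)
  ultimately show ?thesis
    using fv.dim_le_dim_plus_card[of ?T "{}" ?S] by (simp add: spandim_def)
qed

lemma spandim_LForm_0: "spandim (LForm A 0 ` S :: (nat \<Rightarrow> 'a::field) set) = 0"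
proof -
  have "(LForm A 0 ` S :: (nat \<Rightarrow> 'a) set) \<subseteq> fv.span {}"
    by (auto simp: LForm_def fun_eq_iff)
  then have "fv.dim (LForm A 0 ` S :: (nat \<Rightarrow> 'a) set) \<le> card ({} :: (nat \<Rightarrow> 'a) set)"
    by (rule fv.dim_le_card) simp
  then show ?thesis
    by (simp add: spandim_def)
qed

lemma spandim_LForm_telescope:
  fixes A :: "nat \<Rightarrow> nat set" and K :: "nat set"
  assumes "finite K" "\<And>k. k < m \<Longrightarrow> A k \<subseteq> {1..n}"
    and "\<And>k. k < m \<Longrightarrow> card (A k) mod CARD('p::prime_card) \<in> K"
    and "i + 2 * card K \<le> Suc s" "s < CARD('p)" "2 * s \<le> n - 1 + 2 * card K"
  shows "spandim (LForm A m ` {H. H \<subseteq> {1..n-1} \<and> i \<le> card H \<and> card H \<le> s} :: (nat \<Rightarrow> 'p mod_ring) set)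
      + (\<Sum>j\<in>{i..<i + 2 * card K}. (n - 1) choose j)
    \<le> spandim (LForm A m ` {H. H \<subseteq> {1..n-1} \<and> i \<le> card H \<and> card H < i + 2 * card K}
        :: (nat \<Rightarrow> 'p mod_ring) set)
      + (\<Sum>j\<in>{Suc s - 2 * card K..s}. (n - 1) choose j)"
proof -
  let ?W = "\<lambda>t. spandim (LForm A m ` {H. H \<subseteq> {1..n-1} \<and> i \<le> card H \<and> card H < t}
    :: (nat \<Rightarrow> 'p mod_ring) set)"
  define t where "t = Suc s - (i + 2 * card K)"
  have t: "i + 2 * card K + t = Suc s"
    using assms(4) by (simp add: t_def)
  have "?W (i + 2 * card K + t) + (\<Sum>j\<in>{i..<i + 2 * card K}. (n - 1) choose j)
      \<le> ?W (i + 2 * card K) + (\<Sum>j\<in>{i + t..<i + t + 2 * card K}. (n - 1) choose j)"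
  proof (rule telescoping_sliding_window)
    fix b assume "i + 2 * card K \<le> b" "b < i + 2 * card K + t"
    with t assms(5,6) show "?W (Suc b) + ((n - 1) choose (b - 2 * card K)) \<le> ?W b + ((n - 1) choose b)"
      by (intro spandim_LForm_step[OF assms(1-3)]) linarith+
  qed
  moreover have "{i + t..<i + t + 2 * card K} = {Suc s - 2 * card K..s}"
    using t by auto
  ultimately show ?thesis
    using t by (simp add: less_Suc_eq_le)
qed

theorem mainTheorem6:
  fixes A :: "nat \<Rightarrow> nat set" and m n :: nat and K L :: "nat set"
    and i :: nat
  assumes "K \<subseteq> {0..<CARD('p::prime_card)}" and "L \<subseteq> {0..<CARD('p)}"
    and "K \<inter> L = {}"
    and "\<And>k. k < m \<Longrightarrow> A k \<subseteq> {1..n}"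
    and "inj_on A {0..<m}"
    and "\<And>k. k < m \<Longrightarrow> card (A k) mod CARD('p) \<in> K"
    and "\<And>k l. k < m \<Longrightarrow> l < m \<Longrightarrow> k \<noteq> l \<Longrightarrow> card (A k \<inter> A l) mod CARD('p) \<in> L"
    and "int n \<ge> 2 * int (card L) - 2 * int (card K) + 1"
    and "int i \<le> int (card L) - 2 * int (card K) + 1"
  shows "(\<Sum>j\<in>{i..<i + 2 * card K}. (n - 1) choose j)
       + (spandim ((LForm A m :: nat set \<Rightarrow> nat \<Rightarrow> 'p mod_ring) `
                    {H. H \<subseteq> {1..n-1} \<and> i \<le> card H \<and> card H \<le> card L})
          - spandim ((LForm A m :: nat set \<Rightarrow> nat \<Rightarrow> 'p mod_ring) `
                    {H. H \<subseteq> {1..n-1} \<and> i \<le> card H \<and> card H < i + 2 * card K}))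
     \<le> (\<Sum>j\<in>{card L + 1 - 2 * card K..card L}. (n - 1) choose j)"
proof (cases "K = {}")
  case True
  then have "m = 0"
    using assms(6)[of 0] by auto
  with True show ?thesis
    by (simp add: spandim_LForm_0)
next
  case False
  have "finite K"
    using assms(1) by (rule finite_subset) simp
  have "L \<subset> {0..<CARD('p)}"
    using assms(1-3) False by blast
  then have "card L < CARD('p)"
    using psubset_card_mono[of "{0..<CARD('p)}" L] by simp
  then have "spandim (LForm A m ` {H. H \<subseteq> {1..n-1} \<and> i \<le> card H \<and> card H \<le> card L}
        :: (nat \<Rightarrow> 'p mod_ring) set) + (\<Sum>j\<in>{i..<i + 2 * card K}. (n - 1) choose j)
      \<le> spandim (LForm A m ` {H. H \<subseteq> {1..n-1} \<and> i \<le> card H \<and> card H < i + 2 * card K}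
        :: (nat \<Rightarrow> 'p mod_ring) set) + (\<Sum>j\<in>{Suc (card L) - 2 * card K..card L}. (n - 1) choose j)"
    using assms(8,9) by (intro spandim_LForm_telescope[OF \<open>finite K\<close> assms(4,6)]) linarith+
  moreover have "spandim (LForm A m ` {H. H \<subseteq> {1..n-1} \<and> i \<le> card H \<and> card H < i + 2 * card K}
        :: (nat \<Rightarrow> 'p mod_ring) set)
      \<le> spandim (LForm A m ` {H. H \<subseteq> {1..n-1} \<and> i \<le> card H \<and> card H < Suc (card L)}
        :: (nat \<Rightarrow> 'p mod_ring) set)"
    using assms(9) by (intro spandim_LForm_mono) simp_all
  ultimately show ?thesis
    by (simp add: less_Suc_eq_le) arith
qed

end
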